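(* (a) For every integer $k \geq 10$, if $|q - q_k| \leq q_k^{-2k-6}$ then $q \in \mathcal{B}_3$. (b) If $0 < q - q_9 \leq q_9^{-24}$ then $q \in \mathcal{B}_3$.
   Context: For $q \in (1,2)$ let $I_q = [0, \frac{1}{q-1}]$. A sequence $(\epsilon_j)_{j\ge1} \in \{0,1\}^\mathbb{N}$ is a base $q$ expansion of $x$ if $x = \sum_{j\ge1} \epsilon_j q^{-j}$; let $\Sigma_q(x)$ be the set of base $q$ expansions of $x$. Let $\mathcal{U}_q^{(3)} = \{x \in I_q : |\Sigma_q(x)| = 3\}$ and $\mathcal{B}_3 = \{q \in (1,2) : \mathcal{U}_q^{(3)} \neq \emptyset\}$. For $k \geq 2$, the $k$-Bonacci number $q_k$ is the unique root in $(1,2)$ of $x^k - x^{k-1} - \cdots - x - 1 = 0$. *)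

theory Defs
  imports "HOL-Analysis.Analysis"
begin

text \<open>A digit sequence (in {0,1}) is encoded as a function nat => bool; the digit
  epsilon_j (j >= 1) of the paper is stored at position j - 1.\<close>

definition digit :: "bool \<Rightarrow> real" where
  "digit b = (if b then 1 else 0)"

definition expansions :: "real \<Rightarrow> real \<Rightarrow> (nat \<Rightarrow> bool) set" where
  "expansions q x = {e. (\<lambda>j. digit (e j) / q ^ (Suc j)) sums x}"

definition I_q :: "real \<Rightarrow> real set" where
  "I_q q = {0 .. 1 / (q - 1)}"

definition U3 :: "real \<Rightarrow> real set" where
  "U3 q = {x \<in> I_q q. finite (expansions q x) \<and> card (expansions q x) = 3}"

definition B3 :: "real set" where
  "B3 = {q. 1 < q \<and> q < 2 \<and> U3 q \<noteq> {}}"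

definition kbonacci :: "nat \<Rightarrow> real" where
  "kbonacci k = (THE x. 1 < x \<and> x < 2 \<and> x ^ k = (\<Sum>i<k. x ^ i))"

end

theory Submission
  imports Defs
begin

text \<open>Let \<open>H = ones_val q k\<close> be the value of the word \<open>1\<^sup>k\<close>, so that \<open>H = 1\<close> exactly at
  \<open>q = q\<^sub>k\<close>. For tails \<open>A\<close>, \<open>B\<close>, \<open>C\<close> the words \<open>0 1\<^sup>2\<^sup>k 0 A\<close>, \<open>1 0\<^sup>k 1\<^sup>k 0 B\<close> and
  \<open>1 0\<^sup>k\<^sup>-\<^sup>1 1 0\<^sup>k\<^sup>+\<^sup>1 C\<close> have the same value as soon as
  \<open>val A - val B = q\<^sup>2\<^sup>k\<^sup>+\<^sup>1 (1 - H)\<close> and \<open>val B - val C = q\<^sup>k\<^sup>+\<^sup>1 (1 - H)\<close>.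
  For \<open>|q - q\<^sub>k| \<le> q\<^sub>k\<^sup>-\<^sup>2\<^sup>k\<^sup>-\<^sup>6\<close> these differences are at most \<open>3/8\<close>, and every such pair of
  differences is realised by tails without seven equal consecutive digits, built from blocks of
  four digits by a rounding scheme on a hexagon. For \<open>q \<ge> 1.997\<close> such tails, and the runs of the
  three words, determine every digit of an expansion from the value and the digits before it;
  hence the common value has exactly these three expansions.\<close>

section \<open>Values of digit sequences\<close>

definition seq_val :: "real \<Rightarrow> (nat \<Rightarrow> bool) \<Rightarrow> real" where
  "seq_val q e = (\<Sum>j. digit (e j) / q ^ Suc j)"

definition drop_digits :: "nat \<Rightarrow> (nat \<Rightarrow> bool) \<Rightarrow> nat \<Rightarrow> bool" where
  "drop_digits n e = (\<lambda>j. e (j + n))"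

definition prepend_run :: "bool \<Rightarrow> nat \<Rightarrow> (nat \<Rightarrow> bool) \<Rightarrow> nat \<Rightarrow> bool" where
  "prepend_run b m t = (\<lambda>j. if j < m then b else t (j - m))"

text \<open>The value of the word \<open>1\<^sup>k\<close>; the \<open>k\<close>-bonacci number is the solution of
  \<open>ones_val q k = 1\<close> in \<open>(1, 2)\<close>.\<close>

definition ones_val :: "real \<Rightarrow> nat \<Rightarrow> real" where
  "ones_val q k = (1 - 1 / q ^ k) / (q - 1)"

lemma drop_digits_drop_digits [simp]: "drop_digits m (drop_digits n e) = drop_digits (m + n) e"
  by (simp add: drop_digits_def add.assoc)

lemma drop_digits_0 [simp]: "drop_digits 0 e = e"
  by (simp add: drop_digits_def)

lemma drop_digits_apply_0 [simp]: "drop_digits n e 0 = e n"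
  by (simp add: drop_digits_def)

lemma drop_digits_prepend_run_ge:
  "m \<le> n \<Longrightarrow> drop_digits n (prepend_run b m t) = drop_digits (n - m) t"
  by (auto simp: drop_digits_def prepend_run_def)

lemma drop_digits_prepend_run_le:
  "n \<le> m \<Longrightarrow> drop_digits n (prepend_run b m t) = prepend_run b (m - n) t"
  by (auto simp: drop_digits_def prepend_run_def)

lemma ones_val_add: "q \<noteq> 0 \<Longrightarrow> ones_val q (m + n) = ones_val q m + ones_val q n / q ^ m"
proof -
  assume "q \<noteq> 0"
  then have num: "1 - 1 / q ^ (m + n) = (1 - 1 / q ^ m) + (1 - 1 / q ^ n) / q ^ m"
    by (simp add: power_add field_simps)
  show ?thesis
    unfolding ones_val_def num by (simp add: add_divide_distrib mult.commute)
qed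

locale expansion_base =
  fixes q :: real
  assumes q_gt1: "1 < q"
begin

lemma q_pos: "0 < q"
  using q_gt1 by simp

lemma sums_inverse_powers: "(\<lambda>j. 1 / q ^ Suc j) sums (1 / (q - 1))"
proof -
  have "(\<lambda>j. 1 / q * (1 / q) ^ j) sums (1 / q * (1 / (1 - 1 / q)))"
    using q_gt1 by (intro sums_mult geometric_sums) simp
  moreover have "1 / q * (1 / (1 - 1 / q)) = 1 / (q - 1)"
    using q_gt1 by (simp add: field_simps)
  ultimately show ?thesis
    by (simp add: power_divide)
qed

lemma ones_val_1 [simp]: "ones_val q (Suc 0) = 1 / q"
  using q_gt1 by (simp add: ones_val_def field_simps)

lemma sum_inverse_powers: "(\<Sum>j<k. 1 / q ^ Suc j) = ones_val q k"
proof (induction k)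
  case (Suc k)
  then show ?case
    using ones_val_add[of q k "Suc 0"] q_pos by simp
qed (simp add: ones_val_def)

lemma summable_digit_series: "summable (\<lambda>j. digit (e j) / q ^ Suc j)"
proof (rule summable_comparison_test'[OF sums_summable[OF sums_inverse_powers]])
  show "norm (digit (e j) / q ^ Suc j) \<le> 1 / q ^ Suc j" for j
    using q_pos by (simp add: digit_def)
qed

lemma expansions_iff: "e \<in> expansions q x \<longleftrightarrow> seq_val q e = x"
  using summable_digit_series[of e] by (auto simp: expansions_def seq_val_def sums_iff)

lemma seq_val_nonneg: "0 \<le> seq_val q e"
  unfolding seq_val_def
  by (rule suminf_nonneg[OF summable_digit_series]) (use q_pos in \<open>simp add: digit_def\<close>)

lemma seq_val_complement: "seq_val q e + seq_val q (\<lambda>j. \<not> e j) = 1 / (q - 1)"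
proof -
  have "(\<lambda>j. digit (e j) / q ^ Suc j + digit (\<not> e j) / q ^ Suc j)
      sums (seq_val q e + seq_val q (\<lambda>j. \<not> e j))"
    unfolding seq_val_def by (intro sums_add summable_sums summable_digit_series)
  moreover have "(\<lambda>j. digit (e j) / q ^ Suc j + digit (\<not> e j) / q ^ Suc j) = (\<lambda>j. 1 / q ^ Suc j)"
    by (auto simp: digit_def)
  ultimately show ?thesis
    using sums_inverse_powers sums_unique2 by metis
qed

lemma seq_val_le: "seq_val q e \<le> 1 / (q - 1)"
  using seq_val_complement[of e] seq_val_nonneg[of "\<lambda>j. \<not> e j"] by linarith

lemma seq_val_split:
  "seq_val q e = (\<Sum>j<n. digit (e j) / q ^ Suc j) + seq_val q (drop_digits n e) / q ^ n"
proof -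
  have "seq_val q e
      = (\<Sum>j. digit (e (j + n)) / q ^ Suc (j + n)) + (\<Sum>j<n. digit (e j) / q ^ Suc j)"
    unfolding seq_val_def by (rule suminf_split_initial_segment[OF summable_digit_series])
  also have "(\<Sum>j. digit (e (j + n)) / q ^ Suc (j + n))
      = (\<Sum>j. digit (drop_digits n e j) / q ^ Suc j / q ^ n)"
    by (simp add: drop_digits_def power_add field_simps)
  also have "\<dots> = seq_val q (drop_digits n e) / q ^ n"
    unfolding seq_val_def by (rule suminf_divide[OF summable_digit_series])
  finally show ?thesis
    by simp
qed

lemma seq_val_Suc: "seq_val q e = (digit (e 0) + seq_val q (drop_digits 1 e)) / q"
  using seq_val_split[of e 1] by (simp add: add_divide_distrib)

lemma seq_val_prepend_run:
  "seq_val q (prepend_run b m t) = digit b * ones_val q m + seq_val q t / q ^ m"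
proof -
  have "(\<Sum>j<m. digit (prepend_run b m t j) / q ^ Suc j) = (\<Sum>j<m. digit b * (1 / q ^ Suc j))"
    by (intro sum.cong) (auto simp: prepend_run_def)
  also have "\<dots> = digit b * ones_val q m"
    by (simp only: sum_distrib_left[symmetric] sum_inverse_powers)
  finally show ?thesis
    using seq_val_split[of "prepend_run b m t" m] by (simp add: drop_digits_prepend_run_ge)
qed

lemma seq_val_ge_digit: "e j \<Longrightarrow> 1 / q ^ Suc j \<le> seq_val q e"
  using seq_val_split[of e "Suc j"] seq_val_nonneg[of "drop_digits (Suc j) e"] q_gt1
    member_le_sum[of j "{..<Suc j}" "\<lambda>i. digit (e i) / q ^ Suc i"]
  by (force simp: digit_def)

lemma seq_val_le_not_digit: "\<not> e j \<Longrightarrow> seq_val q e \<le> 1 / (q - 1) - 1 / q ^ Suc j"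
  using seq_val_complement[of e] seq_val_ge_digit[of "\<lambda>i. \<not> e i" j] by simp

end

section \<open>Digits determined by the value\<close>

text \<open>If \<open>t\<close> has digit \<open>0\<close> at \<open>n\<close> and a tail of value \<open>< 1\<close>, an expansion of the same value that
  agrees with \<open>t\<close> before \<open>n\<close> cannot have digit \<open>1\<close> there; symmetrically for digit \<open>1\<close>, because
  \<open>1 + (2 - q) / (q - 1) = 1 / (q - 1)\<close> is the largest value of a tail.\<close>

definition digit_determined :: "real \<Rightarrow> (nat \<Rightarrow> bool) \<Rightarrow> nat \<Rightarrow> bool" where
  "digit_determined q t n \<longleftrightarrow>
     (\<not> t n \<longrightarrow> seq_val q (drop_digits (Suc n) t) < 1) \<and>
     (t n \<longrightarrow> (2 - q) / (q - 1) < seq_val q (drop_digits (Suc n) t))"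

lemma digit_determined_prepend_run:
  assumes "m \<le> n" "digit_determined q t (n - m)"
  shows "digit_determined q (prepend_run b m t) n"
proof -
  have "drop_digits (Suc n) (prepend_run b m t) = drop_digits (Suc (n - m)) t"
    using assms(1) by (simp add: drop_digits_prepend_run_ge Suc_diff_le)
  moreover have "prepend_run b m t n = t (n - m)"
    using assms(1) by (simp add: prepend_run_def)
  ultimately show ?thesis
    using assms(2) by (simp add: digit_determined_def)
qed

definition bounded_runs :: "nat \<Rightarrow> (nat \<Rightarrow> bool) \<Rightarrow> bool" where
  "bounded_runs L t \<longleftrightarrow> (\<forall>n. (\<exists>j<L. t (n + j)) \<and> (\<exists>j<L. \<not> t (n + j)))"

lemma bounded_runs_drop_digits: "bounded_runs L t \<Longrightarrow> bounded_runs L (drop_digits m t)"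
  unfolding bounded_runs_def drop_digits_def by (metis add.commute add.left_commute)

context expansion_base
begin

lemma seq_val_drop_digits_eq:
  assumes "seq_val q e = seq_val q t" "\<forall>i<n. e i = t i"
  shows "seq_val q (drop_digits n e) = seq_val q (drop_digits n t)"
proof -
  have "(\<Sum>j<n. digit (e j) / q ^ Suc j) = (\<Sum>j<n. digit (t j) / q ^ Suc j)"
    using assms(2) by (intro sum.cong) auto
  then show ?thesis
    using assms(1) seq_val_split[of e n] seq_val_split[of t n] q_pos by simp
qed

lemma digit_determined_eq:
  assumes "seq_val q e = seq_val q t" "\<forall>i<n. e i = t i" "digit_determined q t n"
  shows "e n = t n"
proof -
  have "seq_val q (drop_digits n e) = seq_val q (drop_digits n t)"
    by (rule seq_val_drop_digits_eq[OF assms(1,2)])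
  then have tails: "digit (e n) + seq_val q (drop_digits (Suc n) e)
      = digit (t n) + seq_val q (drop_digits (Suc n) t)"
    using seq_val_Suc[of "drop_digits n e"] seq_val_Suc[of "drop_digits n t"] q_pos by simp
  have "1 + (2 - q) / (q - 1) = 1 / (q - 1)"
    using q_gt1 by (simp add: field_simps)
  then show ?thesis
    using tails assms(3) seq_val_nonneg[of "drop_digits (Suc n) e"]
      seq_val_le[of "drop_digits (Suc n) e"]
    unfolding digit_determined_def digit_def by (cases "e n"; cases "t n") auto
qed

lemma digit_determined_agree:
  assumes "seq_val q e = seq_val q t" "\<forall>i<m. e i = t i"
    and "\<forall>n. m \<le> n \<and> n < m' \<longrightarrow> digit_determined q t n"
  shows "\<forall>i<m'. e i = t i"
  using assms(3)
proof (induction m')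
  case (Suc m')
  then have agree: "\<forall>i<m'. e i = t i"
    by simp
  have "e m' = t m'"
  proof (cases "m \<le> m'")
    case True
    then show ?thesis
      using digit_determined_eq[OF assms(1) agree] Suc.prems by simp
  qed (use assms(2) in simp)
  then show ?case
    using agree by (auto simp: less_Suc_eq)
qed simp

lemma eq_if_digits_determined:
  assumes "seq_val q e = seq_val q t" "\<forall>i<m. e i = t i" "\<forall>n\<ge>m. digit_determined q t n"
  shows "e = t"
proof
  fix i
  show "e i = t i"
    using digit_determined_agree[OF assms(1,2), of "Suc i"] assms(3) by simp
qed

lemma digit_determined_in_run:
  assumes "q + 1 < q\<^sup>2" "Suc n < m"
  shows "digit_determined q (prepend_run b m t) n"
proof (cases b)
  case True
  have "(2 - q) / (q - 1) < 1 / q"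
    using assms(1) q_gt1 by (simp add: field_simps power2_eq_square)
  also have "\<dots> \<le> seq_val q (drop_digits (Suc n) (prepend_run b m t))"
    using seq_val_ge_digit[of "drop_digits (Suc n) (prepend_run b m t)" 0] True assms(2)
    by (simp add: drop_digits_def prepend_run_def)
  finally show ?thesis
    using True assms(2) by (simp add: digit_determined_def prepend_run_def)
next
  case False
  have "seq_val q (drop_digits (Suc n) (prepend_run b m t)) = seq_val q t / q ^ (m - Suc n)"
    using False assms(2) by (simp add: drop_digits_prepend_run_le seq_val_prepend_run digit_def)
  also have "\<dots> \<le> seq_val q t / q"
    using assms(2) q_gt1 seq_val_nonneg[of t] power_increasing[of 1 "m - Suc n" q]
    by (intro divide_left_mono) auto
  also have "\<dots> \<le> 1 / (q - 1) / q"
    using divide_right_mono[OF seq_val_le[of t], of q] q_pos by simp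
  also have "\<dots> < 1"
    using assms(1) q_gt1 by (simp add: field_simps power2_eq_square)
  finally show ?thesis
    using False assms(2) by (simp add: digit_determined_def prepend_run_def)
qed

lemma digit_determined_run_end:
  assumes "q + 1 < q\<^sup>2" "n < m"
    and "if b then (2 - q) / (q - 1) < seq_val q t else seq_val q t < 1"
  shows "digit_determined q (prepend_run b m t) n"
proof (cases "Suc n < m")
  case False
  then have "m = Suc n"
    using assms(2) by simp
  then have "drop_digits (Suc n) (prepend_run b m t) = t" "prepend_run b m t n = b"
    by (simp add: drop_digits_prepend_run_ge, simp add: prepend_run_def)
  then show ?thesis
    using assms(3) by (cases b) (simp_all add: digit_determined_def)
qed (use assms(1) digit_determined_in_run in blast)

lemma seq_val_bounded_runs:
  assumes "bounded_runs L t"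
  shows "1 / q ^ L \<le> seq_val q t" and "seq_val q t \<le> 1 / (q - 1) - 1 / q ^ L"
proof -
  have "1 / q ^ L \<le> 1 / q ^ Suc j" if "j < L" for j
    using that q_gt1 by (intro divide_left_mono power_increasing) auto
  moreover obtain j j' where "j < L" "t j" "j' < L" "\<not> t j'"
    using assms unfolding bounded_runs_def by (metis add_0)
  ultimately show "1 / q ^ L \<le> seq_val q t" "seq_val q t \<le> 1 / (q - 1) - 1 / q ^ L"
    using seq_val_ge_digit[of t j] seq_val_le_not_digit[of t j'] by fastforce+
qed

end

text \<open>The estimates for tails built from blocks of four digits need bases this close to \<open>2\<close>;
  all \<open>k\<close>-bonacci numbers with \<open>k \<ge> 9\<close> exceed \<open>1.998\<close>.\<close>

locale near_two =
  fixes q :: real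
  assumes q_ge: "1997/1000 \<le> q" and q_lt2: "q < 2"

sublocale near_two \<subseteq> expansion_base
  using q_ge by unfold_locales simp

context near_two
begin

lemma above_golden_ratio: "q + 1 < q\<^sup>2"
proof -
  have "0 < (q - 19/10) * (q + 9/10)"
    using q_ge by (intro mult_pos_pos) auto
  then show ?thesis
    by (simp add: algebra_simps power2_eq_square)
qed

lemma near_two_bounds: "1 / (q - 1) - 1 / q ^ 7 < 1" "(2 - q) / (q - 1) < 1 / q ^ 8"
proof -
  have "q ^ 7 \<le> 2 ^ 7" "q ^ 8 \<le> 2 ^ 8"
    using q_ge q_lt2 by (intro power_mono; simp)+
  then have "1 / 128 \<le> 1 / q ^ 7" "1 / 256 \<le> 1 / q ^ 8"
    using q_pos by (simp_all add: field_simps)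
  moreover have "(2 - q) / (q - 1) \<le> 3 / 997"
    using q_ge by (simp add: field_simps)
  moreover have "1 / (q - 1) - 1 = (2 - q) / (q - 1)"
    using q_gt1 by (simp add: field_simps)
  ultimately show "1 / (q - 1) - 1 / q ^ 7 < 1" "(2 - q) / (q - 1) < 1 / q ^ 8"
    by linarith+
qed

lemma seq_val_bounded_runs_lt_1: "bounded_runs 7 t \<Longrightarrow> seq_val q t < 1"
  using seq_val_bounded_runs(2)[of 7 t] near_two_bounds(1) by linarith

lemma seq_val_bounded_runs_gt:
  assumes "bounded_runs 7 t"
  shows "(2 - q) / (q - 1) < seq_val q t / q"
proof -
  have "q ^ 8 = q ^ 7 * q"
    using power_add[of q 7 1] by simp
  then have "1 / q ^ 8 \<le> seq_val q t / q"
    using divide_right_mono[OF seq_val_bounded_runs(1)[OF assms], of q] q_pos by simp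
  then show ?thesis
    using near_two_bounds(2) by linarith
qed

lemma digit_determined_bounded_runs:
  assumes "bounded_runs 7 t"
  shows "digit_determined q t n"
proof -
  let ?s = "seq_val q (drop_digits (Suc n) t)"
  have runs: "bounded_runs 7 (drop_digits (Suc n) t)"
    using assms by (rule bounded_runs_drop_digits)
  have "?s / q \<le> ?s / 1"
    using seq_val_nonneg q_gt1 by (intro divide_left_mono) auto
  then show ?thesis
    using seq_val_bounded_runs_lt_1[OF runs] seq_val_bounded_runs_gt[OF runs]
    unfolding digit_determined_def by simp
qed

lemma digit_determined_zeros_bounded_runs:
  assumes "bounded_runs 7 t"
  shows "digit_determined q (prepend_run False m t) n"
proof (cases "n < m")
  case True
  then show ?thesis
    using above_golden_ratio seq_val_bounded_runs_lt_1[OF assms]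
    by (intro digit_determined_run_end) auto
qed (use assms digit_determined_bounded_runs digit_determined_prepend_run in auto)

lemma digit_determined_ones_zero_bounded_runs:
  assumes "bounded_runs 7 t"
  shows "digit_determined q (prepend_run True m (prepend_run False 1 t)) n"
proof (cases "n < m")
  case True
  have "seq_val q (prepend_run False 1 t) = seq_val q t / q"
    by (simp add: seq_val_prepend_run digit_def)
  then show ?thesis
    using above_golden_ratio seq_val_bounded_runs_gt[OF assms] True
    by (intro digit_determined_run_end) auto
qed (use assms digit_determined_zeros_bounded_runs digit_determined_prepend_run in auto)

end

section \<open>Three expansions of one value\<close>

definition first_expansion :: "nat \<Rightarrow> (nat \<Rightarrow> bool) \<Rightarrow> nat \<Rightarrow> bool" where
  "first_expansion k A = prepend_run False 1 (prepend_run True (2 * k) (prepend_run False 1 A))"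

definition second_expansion :: "nat \<Rightarrow> (nat \<Rightarrow> bool) \<Rightarrow> nat \<Rightarrow> bool" where
  "second_expansion k B =
     prepend_run True 1 (prepend_run False k (prepend_run True k (prepend_run False 1 B)))"

definition third_expansion :: "nat \<Rightarrow> (nat \<Rightarrow> bool) \<Rightarrow> nat \<Rightarrow> bool" where
  "third_expansion k C =
     prepend_run True 1 (prepend_run False (k - 1) (prepend_run True 1 (prepend_run False (k + 1) C)))"

lemma expansion_digits:
  assumes "1 \<le> k"
  shows "\<not> first_expansion k A 0" "second_expansion k B 0" "third_expansion k C 0"
    and "\<not> second_expansion k B k" "third_expansion k C k"
    and "\<forall>i<k. third_expansion k C i = second_expansion k B i"
  using assms
  by (auto simp: first_expansion_def second_expansion_def third_expansion_def prepend_run_def)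

context expansion_base
begin

lemma seq_val_first_expansion:
  "seq_val q (first_expansion k A) = ones_val q (2 * k) / q + seq_val q A / q ^ (2 * k + 2)"
  using q_pos
  by (simp add: first_expansion_def seq_val_prepend_run digit_def power_add mult_2)
    (simp add: field_simps)

lemma seq_val_second_expansion:
  "seq_val q (second_expansion k B)
     = 1 / q + ones_val q k / q ^ (k + 1) + seq_val q B / q ^ (2 * k + 2)"
  using q_pos
  by (simp add: second_expansion_def seq_val_prepend_run digit_def power_add mult_2)
    (simp add: field_simps)

lemma seq_val_third_expansion:
  assumes "1 \<le> k"
  shows "seq_val q (third_expansion k C)
    = 1 / q + 1 / q ^ (k + 1) + seq_val q C / q ^ (2 * k + 2)"
proof -
  obtain j where "k = Suc j"
    using assms by (cases k) auto
  then show ?thesis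
    using q_pos
    by (simp add: third_expansion_def seq_val_prepend_run digit_def power_add mult_2)
      (simp add: field_simps)
qed

lemma seq_val_expansions_eq:
  assumes "1 \<le> k"
    and "seq_val q A - seq_val q B = q ^ (2 * k + 1) * (1 - ones_val q k)"
    and "seq_val q B - seq_val q C = q ^ (k + 1) * (1 - ones_val q k)"
  shows "seq_val q (first_expansion k A) = seq_val q (second_expansion k B)"
    and "seq_val q (second_expansion k B) = seq_val q (third_expansion k C)"
proof -
  have "ones_val q (2 * k) = ones_val q k + ones_val q k / q ^ k"
    using ones_val_add[of q k k] q_pos by (simp add: mult_2)
  with assms(2) q_pos show "seq_val q (first_expansion k A) = seq_val q (second_expansion k B)"
    unfolding seq_val_first_expansion seq_val_second_expansion
    by (simp add: power_add mult_2) (simp add: field_simps)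
  from assms(3) q_pos show "seq_val q (second_expansion k B) = seq_val q (third_expansion k C)"
    unfolding seq_val_second_expansion seq_val_third_expansion[OF assms(1)]
    by (simp add: power_add mult_2) (simp add: field_simps)
qed

end

context near_two
begin

lemma expansions_eq_three:
  assumes "1 \<le> k" and runs: "bounded_runs 7 A" "bounded_runs 7 B" "bounded_runs 7 C"
    and vals: "seq_val q (first_expansion k A) = x" "seq_val q (second_expansion k B) = x"
      "seq_val q (third_expansion k C) = x"
  shows "expansions q x = {first_expansion k A, second_expansion k B, third_expansion k C}"
proof (intro equalityI subsetI)
  fix e
  assume "e \<in> expansions q x"
  then have e: "seq_val q e = x"
    by (simp add: expansions_iff)
  have det1: "digit_determined q (first_expansion k A) n" if "1 \<le> n" for n
    unfolding first_expansion_def using that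
    by (intro digit_determined_ones_zero_bounded_runs[OF runs(1)] digit_determined_prepend_run)
  have det2_run: "digit_determined q (second_expansion k B) n" if "1 \<le> n" "n < k" for n
    unfolding second_expansion_def
    by (rule digit_determined_prepend_run[OF _ digit_determined_in_run])
      (use that above_golden_ratio in auto)
  have det2: "digit_determined q (second_expansion k B) n" if "k + 1 \<le> n" for n
    unfolding second_expansion_def using that
    by (intro digit_determined_ones_zero_bounded_runs[OF runs(2)] digit_determined_prepend_run) auto
  have det3: "digit_determined q (third_expansion k C) n" if "k + 1 \<le> n" for n
    unfolding third_expansion_def using that assms(1)
    by (intro digit_determined_zeros_bounded_runs[OF runs(3)] digit_determined_prepend_run) auto
  show "e \<in> {first_expansion k A, second_expansion k B, third_expansion k C}"
  proof (cases "e 0")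
    case False
    have "e = first_expansion k A"
      by (rule eq_if_digits_determined[of _ _ 1])
        (use False e vals(1) det1 expansion_digits(1)[OF assms(1)] in auto)
    then show ?thesis
      by simp
  next
    case True
    have agree: "\<forall>i<k. e i = second_expansion k B i"
      by (rule digit_determined_agree[of _ _ 1])
        (use True e vals(2) det2_run expansion_digits(2)[OF assms(1)] in auto)
    show ?thesis
    proof (cases "e k")
      case False
      then have "\<forall>i<k + 1. e i = second_expansion k B i"
        using agree expansion_digits(4)[OF assms(1)] by (auto simp: less_Suc_eq)
      then have "e = second_expansion k B"
        by (rule eq_if_digits_determined[rotated]) (use e vals(2) det2 in auto)
      then show ?thesis
        by simp
    next
      case True
      then have "\<forall>i<k + 1. e i = third_expansion k C i"
        using agree expansion_digits(5)[OF assms(1)]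
          expansion_digits(6)[OF assms(1), where B = B and C = C]
        by (auto simp: less_Suc_eq)
      then have "e = third_expansion k C"
        by (rule eq_if_digits_determined[rotated]) (use e vals(3) det3 in auto)
      then show ?thesis
        by simp
    qed
  qed
qed (use vals in \<open>auto simp: expansions_iff\<close>)

lemma in_B3_if_tail_differences:
  assumes "1 \<le> k" and runs: "bounded_runs 7 A" "bounded_runs 7 B" "bounded_runs 7 C"
    and "seq_val q A - seq_val q B = q ^ (2 * k + 1) * (1 - ones_val q k)"
    and "seq_val q B - seq_val q C = q ^ (k + 1) * (1 - ones_val q k)"
  shows "q \<in> B3"
proof -
  define x where "x = seq_val q (first_expansion k A)"
  have expansions:
    "expansions q x = {first_expansion k A, second_expansion k B, third_expansion k C}"
    using seq_val_expansions_eq[OF assms(1,5,6)]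
    by (intro expansions_eq_three[OF assms(1) runs]) (simp_all add: x_def)
  have "first_expansion k A \<noteq> second_expansion k B" "first_expansion k A \<noteq> third_expansion k C"
    "second_expansion k B \<noteq> third_expansion k C"
    by (metis expansion_digits(1,2)[OF assms(1)], metis expansion_digits(1,3)[OF assms(1)],
        metis expansion_digits(4,5)[OF assms(1)])
  then have "card (expansions q x) = 3"
    unfolding expansions by simp
  moreover have "x \<in> I_q q"
    using seq_val_nonneg seq_val_le by (simp add: I_q_def x_def)
  ultimately have "x \<in> U3 q"
    by (simp add: U3_def expansions)
  then show ?thesis
    using q_gt1 q_lt2 by (auto simp: B3_def)
qed

end

section \<open>Tails with prescribed differences\<close>

lemma sums_remainders:
  fixes r d :: "nat \<Rightarrow> real"
  assumes "1 < Q" "\<And>n. \<bar>r n\<bar> \<le> M" "\<And>n. r (Suc n) = Q * r n - d n"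
  shows "(\<lambda>n. d n / Q ^ Suc n) sums r 0"
proof -
  have partial_sums: "(\<Sum>n<N. d n / Q ^ Suc n) = r 0 - r N / Q ^ N" for N
  proof (induction N)
    case (Suc N)
    have "r 0 - r N / Q ^ N + d N / Q ^ Suc N = r 0 - r (Suc N) / Q ^ Suc N"
      using assms(1) by (simp add: assms(3) field_simps)
    with Suc show ?case
      by simp
  qed simp
  have "(\<lambda>N. r N / Q ^ N) \<longlonglongrightarrow> 0"
  proof (rule Lim_null_comparison)
    show "\<forall>\<^sub>F N in sequentially. norm (r N / Q ^ N) \<le> M * (1 / Q) ^ N"
      using assms(1,2) by (intro always_eventually allI) (simp add: power_divide divide_right_mono)
    show "(\<lambda>N. M * (1 / Q) ^ N) \<longlonglongrightarrow> 0"
      using assms(1) by (intro tendsto_mult_right_zero LIMSEQ_power_zero) simp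
  qed
  from tendsto_diff[OF tendsto_const this] show ?thesis
    unfolding sums_def partial_sums by simp
qed

text \<open>Tails are concatenations of the four-digit binary expansions (most significant digit first) of
  integers in \<open>{1..14}\<close>; excluding \<open>0000\<close> and \<open>1111\<close> keeps all runs shorter than \<open>7\<close>.\<close>

definition block_bit :: "int \<Rightarrow> nat \<Rightarrow> bool" where
  "block_bit x i = odd (x div 2 ^ (3 - i))"

definition block_val :: "real \<Rightarrow> int \<Rightarrow> real" where
  "block_val q x = (\<Sum>i<4. digit (block_bit x i) * q ^ (3 - i))"

definition blocks :: "(nat \<Rightarrow> int) \<Rightarrow> nat \<Rightarrow> bool" where
  "blocks X j = block_bit (X (j div 4)) (j mod 4)"

lemma int_0_15_cases:
  fixes x :: int
  assumes "0 \<le> x" "x \<le> 15"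
  shows "x \<in> {0, 1, 2, 3, 4, 5, 6, 7, 8, 9, 10, 11, 12, 13, 14, 15}"
  using assms by simp presburger

lemma block_val_base_2: "0 \<le> x \<Longrightarrow> x \<le> 15 \<Longrightarrow> block_val 2 x = x"
  by (drule (1) int_0_15_cases)
    (auto simp: block_val_def block_bit_def digit_def eval_nat_numeral)

lemma block_bits_nonconstant:
  "1 \<le> x \<Longrightarrow> x \<le> 14 \<Longrightarrow> (\<exists>i<4. block_bit x i) \<and> (\<exists>i<4. \<not> block_bit x i)"
  using int_0_15_cases[of x]
  by (auto simp: block_bit_def Ex_less_Suc eval_nat_numeral)

lemma block_val_base_2_diff:
  assumes "0 \<le> q" "q \<le> 2"
  shows "0 \<le> block_val 2 x - block_val q x"
    and "block_val 2 x - block_val q x \<le> 14 - q ^ 3 - q\<^sup>2 - q"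
proof -
  have diff: "block_val 2 x - block_val q x
      = (\<Sum>i<4. digit (block_bit x i) * (2 ^ (3 - i) - q ^ (3 - i)))"
    by (simp add: block_val_def sum_subtractf[symmetric] right_diff_distrib)
  have gap: "0 \<le> (2::real) ^ j - q ^ j" for j
    using power_mono[OF assms(2,1), of j] by simp
  show "0 \<le> block_val 2 x - block_val q x"
    unfolding diff using gap by (intro sum_nonneg) (simp add: digit_def)
  have "block_val 2 x - block_val q x \<le> (\<Sum>i<4. (2::real) ^ (3 - i) - q ^ (3 - i))"
    unfolding diff using gap by (intro sum_mono) (simp add: digit_def)
  also have "\<dots> = 14 - q ^ 3 - q\<^sup>2 - q"
    by (simp add: eval_nat_numeral)
  finally show "block_val 2 x - block_val q x \<le> 14 - q ^ 3 - q\<^sup>2 - q" .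
qed

lemma bounded_runs_blocks:
  assumes "\<And>n. X n \<in> {1..14}"
  shows "bounded_runs 7 (blocks X)"
  unfolding bounded_runs_def
proof (intro allI conjI)
  fix m :: nat
  define n where "n = (m + 3) div 4"
  have window: "m \<le> 4 * n" "4 * n + 3 < m + 7"
    unfolding n_def by auto
  have block: "blocks X (m + (4 * n + i - m)) = block_bit (X n) i" "4 * n + i - m < 7"
    if "i < 4" for i
    using that window by (simp_all add: blocks_def)
  obtain i i' where "i < 4" "block_bit (X n) i" "i' < 4" "\<not> block_bit (X n) i'"
    using block_bits_nonconstant[of "X n"] assms[of n] by auto
  then show "\<exists>j<7. blocks X (m + j)" "\<exists>j<7. \<not> blocks X (m + j)"
    using block by (intro exI[of _ "4 * n + i - m"] exI[of _ "4 * n + i' - m"]; simp)+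
qed

context expansion_base
begin

lemma seq_val_blocks: "(\<lambda>n. block_val q (X n) / q ^ (4 * n + 4)) sums seq_val q (blocks X)"
proof -
  have "(\<lambda>n. \<Sum>j = n * 4..<n * 4 + 4. digit (blocks X j) / q ^ Suc j) sums seq_val q (blocks X)"
    unfolding seq_val_def by (intro sums_group summable_sums summable_digit_series) simp
  moreover have "(\<Sum>j = n * 4..<n * 4 + 4. digit (blocks X j) / q ^ Suc j)
      = block_val q (X n) / q ^ (4 * n + 4)" for n
  proof -
    have "q ^ (4 * n + 4) = q ^ Suc (i + n * 4) * q ^ (3 - i)" if "i < 4" for i
    proof -
      have "4 * n + 4 = Suc (i + n * 4) + (3 - i)"
        using that by simp
      then show ?thesis
        by (simp only: power_add)
    qed
    then have block_term: "digit (blocks X (i + n * 4)) / q ^ Suc (i + n * 4)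
        = digit (block_bit (X n) i) * q ^ (3 - i) / q ^ (4 * n + 4)" if "i < 4" for i
      using that q_pos by (simp add: blocks_def)
    have "(\<Sum>j = n * 4..<n * 4 + 4. digit (blocks X j) / q ^ Suc j)
        = (\<Sum>i<4. digit (blocks X (i + n * 4)) / q ^ Suc (i + n * 4))"
      using sum.shift_bounds_nat_ivl[of "\<lambda>j. digit (blocks X j) / q ^ Suc j" 0 "n * 4" 4]
      by (simp add: atLeast0LessThan add.commute)
    also have "\<dots> = (\<Sum>i<4. digit (block_bit (X n) i) * q ^ (3 - i) / q ^ (4 * n + 4))"
      using block_term by (intro sum.cong) auto
    finally show ?thesis
      by (simp add: block_val_def sum_divide_distrib)
  qed
  ultimately show ?thesis
    by simp
qed

end

lemma hexagonal_rounding: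
  fixes s1 s2 :: real
  obtains u v :: int
  where "\<bar>s1 - u\<bar> \<le> 2/3" "\<bar>s2 - v\<bar> \<le> 2/3" "\<bar>s1 + s2 - (u + v)\<bar> \<le> 2/3"
proof -
  define a b where "a = \<lfloor>s1\<rfloor>" and "b = \<lfloor>s2\<rfloor>"
  have floors: "a \<le> s1" "s1 < a + 1" "b \<le> s2" "s2 < b + 1"
    unfolding a_def b_def by linarith+
  consider "s1 + s2 - (a + b) \<le> 2/3" | "4/3 \<le> s1 + s2 - (a + b)"
    | "s2 - b \<le> s1 - a" "2/3 < s1 + s2 - (a + b)" "s1 + s2 - (a + b) < 4/3"
    | "s1 - a < s2 - b" "2/3 < s1 + s2 - (a + b)" "s1 + s2 - (a + b) < 4/3"
    by linarith
  then show ?thesis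
  proof cases
    case 1
    show ?thesis
      by (rule that[of a b]; unfold abs_le_iff; intro conjI; use 1 floors in linarith)
  next
    case 2
    show ?thesis
      by (rule that[of "a + 1" "b + 1"]; unfold abs_le_iff; intro conjI; use 2 floors in linarith)
  next
    case 3
    show ?thesis
      by (rule that[of "a + 1" b]; unfold abs_le_iff; intro conjI; use 3 floors in linarith)
  next
    case 4
    show ?thesis
      by (rule that[of a "b + 1"]; unfold abs_le_iff; intro conjI; use 4 floors in linarith)
  qed
qed

definition hexagon :: "(real \<times> real) set" where
  "hexagon = {(r1, r2). \<bar>r1\<bar> \<le> 3/4 \<and> \<bar>r2\<bar> \<le> 3/4 \<and> \<bar>r1 + r2\<bar> \<le> 3/4}"

fun next_remainder :: "real \<Rightarrow> real \<times> real \<Rightarrow> int \<times> int \<times> int \<Rightarrow> real \<times> real" where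
  "next_remainder q (r1, r2) (x, y, z) =
     (q ^ 4 * r1 - (block_val q x - block_val q y), q ^ 4 * r2 - (block_val q y - block_val q z))"

context near_two
begin

lemma block_val_error:
  "0 \<le> x \<Longrightarrow> x \<le> 15 \<Longrightarrow> 0 \<le> x - block_val q x \<and> x - block_val q x \<le> 8/100"
proof -
  assume x: "0 \<le> x" "x \<le> 15"
  have "(1997/1000) ^ 2 \<le> q\<^sup>2" "(1997/1000) ^ 3 \<le> q ^ 3"
    using q_ge by (intro power_mono; simp)+
  then have "14 - q ^ 3 - q\<^sup>2 - q \<le> 8/100"
    using q_ge by (simp add: power2_eq_square power3_eq_cube)
  then show ?thesis
    using block_val_base_2_diff[of q x] block_val_base_2[OF x] q_pos q_lt2 by simp
qed

text \<open>Round \<open>q\<^sup>4 r\<close> to integers \<open>u\<close>, \<open>v\<close> on the hexagonal lattice and take blocks \<open>x = y + u\<close>,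
  \<open>y\<close>, \<open>z = y - v\<close>; the hexagon keeps \<open>|u|\<close>, \<open>|v|\<close>, \<open>|u + v| \<le> 12\<close>, so a common \<open>y\<close> puts all
  three in \<open>{1..14}\<close>, and block values lie within \<open>0.08\<close> of the integers they encode.\<close>

lemma hexagon_step:
  assumes "r \<in> hexagon"
  shows "\<exists>d \<in> {1..14} \<times> {1..14} \<times> {1..14}. next_remainder q r d \<in> hexagon"
proof -
  obtain r1 r2 where r: "r = (r1, r2)"
    by fastforce
  have "q ^ 4 \<le> 2 ^ 4"
    using q_ge q_lt2 by (intro power_mono) auto
  then have "\<bar>q ^ 4 * t\<bar> \<le> 12" if "\<bar>t\<bar> \<le> 3/4" for t
    using that q_pos mult_mono[of "q ^ 4" 16 "\<bar>t\<bar>" "3/4"] by (simp add: abs_mult)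
  then have scaled:
    "\<bar>q ^ 4 * r1\<bar> \<le> 12" "\<bar>q ^ 4 * r2\<bar> \<le> 12" "\<bar>q ^ 4 * r1 + q ^ 4 * r2\<bar> \<le> 12"
    using assms by (auto simp: r hexagon_def simp flip: distrib_left)
  obtain u v :: int where uv: "\<bar>q ^ 4 * r1 - u\<bar> \<le> 2/3" "\<bar>q ^ 4 * r2 - v\<bar> \<le> 2/3"
    "\<bar>q ^ 4 * r1 + q ^ 4 * r2 - (u + v)\<bar> \<le> 2/3"
    by (rule hexagonal_rounding)
  have "\<bar>real_of_int u\<bar> < 13" "\<bar>real_of_int v\<bar> < 13" "\<bar>real_of_int (u + v)\<bar> < 13"
    using scaled uv by (simp_all only: abs_le_iff abs_less_iff of_int_add) linarith+
  then have "\<bar>u\<bar> < 13" "\<bar>v\<bar> < 13" "\<bar>u + v\<bar> < 13"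
    by (simp_all only: of_int_abs of_int_less_numeral_iff)
  define y where "y = max 1 (max (1 - u) (1 + v))"
  have digits: "(y + u, y, y - v) \<in> {1..14} \<times> {1..14} \<times> {1..14}"
    using \<open>\<bar>u\<bar> < 13\<close> \<open>\<bar>v\<bar> < 13\<close> \<open>\<bar>u + v\<bar> < 13\<close> unfolding y_def by auto
  define err where "err t = real_of_int t - block_val q t" for t
  have "0 \<le> err t \<and> err t \<le> 8/100" if "t \<in> {y + u, y, y - v}" for t
    using that digits unfolding err_def by (intro block_val_error) auto
  then have errs: "0 \<le> err (y + u)" "err (y + u) \<le> 8/100" "0 \<le> err y" "err y \<le> 8/100"
    "0 \<le> err (y - v)" "err (y - v) \<le> 8/100"
    by simp_all
  have remainder: "next_remainder q r (y + u, y, y - v)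
      = (q ^ 4 * r1 - u + (err (y + u) - err y), q ^ 4 * r2 - v + (err y - err (y - v)))"
    by (simp add: r err_def)
  have "next_remainder q r (y + u, y, y - v) \<in> hexagon"
    unfolding remainder hexagon_def mem_Collect_eq prod.case abs_le_iff
    using uv[unfolded abs_le_iff of_int_add] errs by (intro conjI; linarith)
  then show ?thesis
    using digits by blast
qed

lemma bounded_runs_tails:
  assumes "\<bar>T1\<bar> \<le> 3/8" "\<bar>T2\<bar> \<le> 3/8"
  obtains A B C where "bounded_runs 7 A" "bounded_runs 7 B" "bounded_runs 7 C"
    and "seq_val q A - seq_val q B = T1" "seq_val q B - seq_val q C = T2"
proof -
  obtain D where D: "\<And>r. r \<in> hexagon \<Longrightarrow>
      D r \<in> {1..14} \<times> {1..14} \<times> {1..14} \<and> next_remainder q r (D r) \<in> hexagon"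
    using hexagon_step by metis
  define R where "R n = ((\<lambda>r. next_remainder q r (D r)) ^^ n) (T1, T2)" for n
  have "(T1, T2) \<in> hexagon"
    using assms abs_triangle_ineq[of T1 T2] by (simp add: hexagon_def)
  then have R_hexagon: "R n \<in> hexagon" for n
    by (induction n) (use D in \<open>simp_all add: R_def\<close>)
  define X Y Z where "X n = fst (D (R n))" and "Y n = fst (snd (D (R n)))"
    and "Z n = snd (snd (D (R n)))" for n
  have digits: "X n \<in> {1..14}" "Y n \<in> {1..14}" "Z n \<in> {1..14}" for n
    using D[OF R_hexagon[of n]] by (auto simp: X_def Y_def Z_def)
  have "R (Suc n) = next_remainder q (R n) (X n, Y n, Z n)" for n
    by (simp add: R_def X_def Y_def Z_def)
  then have R_Suc: "fst (R (Suc n)) = q ^ 4 * fst (R n) - (block_val q (X n) - block_val q (Y n))"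
    "snd (R (Suc n)) = q ^ 4 * snd (R n) - (block_val q (Y n) - block_val q (Z n))" for n
    by (cases "R n"; simp)+
  have R_bounds: "\<bar>fst (R n)\<bar> \<le> 3/4" "\<bar>snd (R n)\<bar> \<le> 3/4" for n
    using R_hexagon[of n] by (auto simp: hexagon_def)
  have power: "(q ^ 4) ^ Suc n = q ^ (4 * n + 4)" for n
  proof -
    have "4 * Suc n = 4 * n + 4"
      by simp
    then show ?thesis
      by (simp only: power_mult[symmetric])
  qed
  have "1 < q ^ 4"
    using q_gt1 by simp
  then have "(\<lambda>n. (block_val q (X n) - block_val q (Y n)) / q ^ (4 * n + 4)) sums fst (R 0)"
    "(\<lambda>n. (block_val q (Y n) - block_val q (Z n)) / q ^ (4 * n + 4)) sums snd (R 0)"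
    unfolding power[symmetric] using R_bounds R_Suc
    by (intro sums_remainders[where M = "3/4"]; simp)+
  moreover have "(\<lambda>n. (block_val q (X n) - block_val q (Y n)) / q ^ (4 * n + 4))
      sums (seq_val q (blocks X) - seq_val q (blocks Y))"
    "(\<lambda>n. (block_val q (Y n) - block_val q (Z n)) / q ^ (4 * n + 4))
      sums (seq_val q (blocks Y) - seq_val q (blocks Z))"
    using sums_diff[OF seq_val_blocks seq_val_blocks] by (simp_all add: diff_divide_distrib)
  ultimately have "seq_val q (blocks X) - seq_val q (blocks Y) = T1"
    "seq_val q (blocks Y) - seq_val q (blocks Z) = T2"
    by (auto simp: R_def dest: sums_unique2)
  then show ?thesis
    using that bounded_runs_blocks digits by blast
qed

end

section \<open>Bases near the \<open>k\<close>-bonacci numbers\<close>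

lemma ones_val_strict_antimono:
  assumes "1 < p" "p < q" "0 < k"
  shows "ones_val q k < ones_val p k"
proof -
  interpret p: expansion_base p
    by unfold_locales (use assms in linarith)
  interpret q: expansion_base q
    by unfold_locales (use assms in linarith)
  have "(\<Sum>j<k. 1 / q ^ Suc j) < (\<Sum>j<k. 1 / p ^ Suc j)"
    using assms by (intro sum_strict_mono divide_strict_left_mono power_strict_mono) auto
  then show ?thesis
    by (simp only: p.sum_inverse_powers q.sum_inverse_powers)
qed

lemma kbonacci_equation_iff:
  assumes "1 < x"
  shows "x ^ k = (\<Sum>i<k. x ^ i) \<longleftrightarrow> ones_val x k = 1"
proof -
  have "x ^ k = (\<Sum>i<k. x ^ i) \<longleftrightarrow> x ^ k * (x - 1) = x ^ k - 1"
    using assms by (simp add: geometric_sum eq_divide_eq)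
  also have "\<dots> \<longleftrightarrow> ones_val x k = 1"
    using assms by (auto simp: ones_val_def field_simps algebra_simps)
  finally show ?thesis .
qed

lemma kbonacci:
  assumes "2 \<le> k"
  shows "1 < kbonacci k" "kbonacci k < 2" "ones_val (kbonacci k) k = 1"
proof -
  define P where "P x \<longleftrightarrow> 1 < x \<and> x < 2 \<and> x ^ k = (\<Sum>i<k. x ^ i)" for x :: real
  define f where "f x = x ^ k - (\<Sum>i<k. x ^ i)" for x :: real
  have "f 1 \<le> 0" "0 \<le> f 2"
    using assms geometric_sum[of "2::real" k] by (simp_all add: f_def)
  moreover have "continuous_on {1..2} f"
    unfolding f_def by (intro continuous_intros)
  ultimately obtain x where x: "1 \<le> x" "x \<le> 2" "f x = 0"
    using IVT'[of f 1 0 2] by auto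
  moreover have "f 1 \<noteq> 0" "f 2 \<noteq> 0"
    using assms geometric_sum[of "2::real" k] by (simp_all add: f_def)
  then have "x \<noteq> 1" "x \<noteq> 2"
    using x by auto
  ultimately have "P x"
    unfolding P_def f_def by simp
  moreover have unique: "y = z" if "P y" "P z" for y z
  proof (rule ccontr)
    assume "y \<noteq> z"
    then consider "y < z" | "z < y"
      by linarith
    then show False
      using that ones_val_strict_antimono[of y z k] ones_val_strict_antimono[of z y k] assms
      by cases (auto simp: P_def kbonacci_equation_iff)
  qed
  ultimately have "P (kbonacci k)"
    unfolding kbonacci_def P_def[symmetric] using theI[of P x] by blast
  then show "1 < kbonacci k" "kbonacci k < 2" "ones_val (kbonacci k) k = 1"
    using kbonacci_equation_iff[of "kbonacci k" k] by (simp_all add: P_def)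
qed

lemma kbonacci_gt:
  assumes "9 \<le> k"
  shows "1998/1000 < kbonacci k"
proof (rule ccontr)
  assume "\<not> 1998/1000 < kbonacci k"
  then have le: "kbonacci k \<le> 1998/1000"
    by simp
  have "(500::real) < (1998/1000) ^ 9"
    by (simp add: power_divide)
  also have "\<dots> \<le> (1998/1000) ^ k"
    using assms by (intro power_increasing) auto
  finally have "1 < ones_val (1998/1000) k"
    by (simp add: ones_val_def field_simps)
  also have "ones_val (1998/1000) k \<le> ones_val (kbonacci k) k"
  proof (cases "kbonacci k = 1998/1000")
    case False
    then show ?thesis
      using le ones_val_strict_antimono[of "kbonacci k" "1998/1000" k] kbonacci[of k] assms
      by simp
  qed (simp only: order.refl)
  finally show False
    using kbonacci[of k] assms by simp
qed

lemma abs_inverse_power_diff_le: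
  fixes a b m :: real
  assumes "0 < m" "m \<le> a" "m \<le> b"
  shows "\<bar>1 / a ^ k - 1 / b ^ k\<bar> \<le> real k * \<bar>a - b\<bar> / m ^ Suc k"
proof -
  have "m / a - m / b = m * (b - a) / (a * b)"
    using assms by (simp add: field_simps)
  then have diff: "\<bar>m / a - m / b\<bar> = m * \<bar>a - b\<bar> / (a * b)"
    using assms by (simp add: abs_mult abs_divide abs_minus_commute)
  have "m * m * \<bar>a - b\<bar> \<le> a * b * \<bar>a - b\<bar>"
    using assms by (intro mult_right_mono mult_mono) auto
  then have "m * \<bar>a - b\<bar> / (a * b) \<le> \<bar>a - b\<bar> / m"
    using assms by (simp add: field_simps mult.assoc)
  have "(m / a) ^ k - (m / b) ^ k = m ^ k * (1 / a ^ k - 1 / b ^ k)"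
    by (simp add: power_divide right_diff_distrib)
  then have "m ^ k * \<bar>1 / a ^ k - 1 / b ^ k\<bar> = \<bar>(m / a) ^ k - (m / b) ^ k\<bar>"
    using assms by (simp add: abs_mult)
  also have "\<dots> \<le> real k * \<bar>m / a - m / b\<bar>"
    using norm_power_diff[of "m / a" "m / b" k] assms by simp
  also have "\<dots> \<le> real k * (\<bar>a - b\<bar> / m)"
    unfolding diff using \<open>m * \<bar>a - b\<bar> / (a * b) \<le> \<bar>a - b\<bar> / m\<close> by (rule mult_left_mono) simp
  finally show ?thesis
    using assms by (simp add: field_simps)
qed

lemma real_le_power_199: "real n \<le> (199/100) ^ Suc n"
proof -
  have "1 + real n * (99/100) \<le> (1 + 99/100) ^ n"
    by (rule Bernoulli_inequality) simp
  then show ?thesis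
    by simp
qed

lemma one_plus_power_le_2:
  fixes t :: real
  assumes "0 \<le> t" "real n * t \<le> 1/2"
  shows "(1 + t) ^ n \<le> 2"
proof -
  have "(1 + t) ^ n \<le> exp t ^ n"
    using assms(1) by (intro power_mono) auto
  also have "\<dots> = exp (real n * t)"
    by (simp add: exp_of_nat_mult)
  also have "\<dots> \<le> exp (1/2)"
    using assms(2) by simp
  finally show ?thesis
    using exp_half_le2 by linarith
qed

lemma ones_val_defect:
  assumes "199/100 \<le> q" "199/100 \<le> c" "ones_val c k = 1"
  shows "\<bar>1 - ones_val q k\<bar> * (q - 1) \<le> 2 * \<bar>q - c\<bar>"
proof -
  have defect: "(1 - ones_val x k) * (x - 1) = x - 2 + 1 / x ^ k" if "1 < x" for x
    using that by (simp add: ones_val_def field_simps)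
  have "\<bar>1 / q ^ k - 1 / c ^ k\<bar> \<le> real k * \<bar>q - c\<bar> / (199/100) ^ Suc k"
    using assms by (intro abs_inverse_power_diff_le) auto
  also have "\<dots> \<le> \<bar>q - c\<bar>"
  proof -
    have "real k * \<bar>q - c\<bar> \<le> (199/100) ^ Suc k * \<bar>q - c\<bar>"
      by (rule mult_right_mono[OF real_le_power_199]) simp
    then show ?thesis
      by (subst pos_divide_le_eq) (auto simp: mult.commute)
  qed
  finally have inverse_powers: "\<bar>1 / q ^ k - 1 / c ^ k\<bar> \<le> \<bar>q - c\<bar>" .
  have "\<bar>(q - c) + (1 / q ^ k - 1 / c ^ k)\<bar> \<le> \<bar>q - c\<bar> + \<bar>1 / q ^ k - 1 / c ^ k\<bar>"
    by (rule abs_triangle_ineq)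
  also have "\<dots> \<le> 2 * \<bar>q - c\<bar>"
    using inverse_powers by simp
  finally have "\<bar>(q - c) + (1 / q ^ k - 1 / c ^ k)\<bar> \<le> 2 * \<bar>q - c\<bar>" .
  moreover have "(1 - ones_val q k) * (q - 1) = (q - c) + (1 / q ^ k - 1 / c ^ k)"
    using defect[of q] defect[of c] assms by simp
  ultimately show ?thesis
    using assms(1) by (simp add: abs_mult)
qed

context near_two
begin

lemma tail_difference_near_kbonacci:
  assumes "9 \<le> k" "\<bar>q - kbonacci k\<bar> \<le> 1 / kbonacci k ^ (2 * k + 6)"
  shows "\<bar>q ^ (2 * k + 1) * (1 - ones_val q k)\<bar> \<le> 3/8"
proof -
  define c where "c = kbonacci k"
  define e where "e = 1 / c ^ (2 * k + 6)"
  have c: "1998/1000 < c" "ones_val c k = 1"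
    using kbonacci_gt[OF assms(1)] kbonacci[of k] assms(1) by (simp_all add: c_def)
  then have "0 < c"
    by simp
  have qc: "\<bar>q - c\<bar> \<le> e"
    using assms(2) by (simp add: c_def e_def)
  have "(31::real) \<le> (1998/1000) ^ 5"
    by (simp add: power_divide)
  also have "\<dots> \<le> c ^ 5"
    using c(1) by (intro power_mono) auto
  finally have c5: "31 \<le> c ^ 5" .
  have powers: "c ^ (2 * k + 6) = c ^ (2 * k + 1) * c ^ 5"
    "c ^ (2 * k + 6) = c ^ (2 * k + 2) * c ^ 4" "c ^ 5 = c * c ^ 4"
    unfolding power_add[symmetric] power_Suc[symmetric] by (simp_all add: ac_simps)
  have ratio: "q ^ (2 * k + 1) \<le> 2 * c ^ (2 * k + 1)"
  proof -
    define t where "t = e / c"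
    have "q \<le> c * (1 + t)"
      using qc \<open>0 < c\<close> by (simp add: t_def abs_le_iff algebra_simps)
    have "real (2 * k + 1) \<le> (199/100) ^ (2 * k + 2)"
      using real_le_power_199[of "2 * k + 1"] by simp
    also have "\<dots> \<le> c ^ (2 * k + 2)"
      using c(1) by (intro power_mono) auto
    finally have "real (2 * k + 1) * 31 \<le> c ^ (2 * k + 2) * c ^ 5"
      using c5 by (intro mult_mono) auto
    moreover have "c * c ^ (2 * k + 6) = c ^ (2 * k + 2) * c ^ 5"
      unfolding powers(2,3) by (simp only: ac_simps)
    ultimately have "2 * real (2 * k + 1) \<le> c * c ^ (2 * k + 6)"
      by linarith
    then have "real (2 * k + 1) * t \<le> 1/2"
      using \<open>0 < c\<close> by (simp add: t_def e_def field_simps)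
    then have "(1 + t) ^ (2 * k + 1) \<le> 2"
      using \<open>0 < c\<close> by (intro one_plus_power_le_2) (simp_all add: t_def e_def)
    have "q ^ (2 * k + 1) \<le> (c * (1 + t)) ^ (2 * k + 1)"
      using \<open>q \<le> c * (1 + t)\<close> q_pos by (intro power_mono) auto
    also have "\<dots> \<le> c ^ (2 * k + 1) * 2"
      unfolding power_mult_distrib using \<open>(1 + t) ^ (2 * k + 1) \<le> 2\<close> \<open>0 < c\<close>
      by (intro mult_left_mono) auto
    finally show ?thesis
      by simp
  qed
  have "\<bar>1 - ones_val q k\<bar> * (q - 1) \<le> 2 * e"
    using ones_val_defect[of q c k] q_ge c(1,2) qc by simp
  then have defect: "\<bar>1 - ones_val q k\<bar> \<le> 2 * e / (q - 1)"
    using q_gt1 by (simp add: field_simps)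
  have "\<bar>q ^ (2 * k + 1) * (1 - ones_val q k)\<bar> \<le> 2 * c ^ (2 * k + 1) * (2 * e / (q - 1))"
    unfolding abs_mult using ratio defect q_pos \<open>0 < c\<close> by (intro mult_mono) auto
  also have "\<dots> = 4 / (c ^ 5 * (q - 1))"
  proof -
    have "2 * a * (2 * (1 / (a * b)) / d) = 4 / (b * d)" if "a \<noteq> 0" for a b d :: real
      using that by (simp add: field_simps)
    then show ?thesis
      using \<open>0 < c\<close> unfolding e_def powers(1) by simp
  qed
  also have "\<dots> \<le> 4 / (31 * (997/1000))"
    using c5 q_ge q_gt1 \<open>0 < c\<close> by (intro divide_left_mono mult_mono mult_pos_pos) auto
  finally show ?thesis
    by simp
qed

end

lemma in_B3_near_kbonacci:
  assumes "9 \<le> k" "q < 2" "\<bar>q - kbonacci k\<bar> \<le> 1 / kbonacci k ^ (2 * k + 6)"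
  shows "q \<in> B3"
proof -
  have c: "1998/1000 < kbonacci k"
    by (rule kbonacci_gt[OF assms(1)])
  have "(1000::real) \<le> (1998/1000) ^ 10"
    by (simp add: power_divide)
  also have "\<dots> \<le> kbonacci k ^ 10"
    using c by (intro power_mono) auto
  also have "\<dots> \<le> kbonacci k ^ (2 * k + 6)"
    using c assms(1) by (intro power_increasing) auto
  finally have "1 / kbonacci k ^ (2 * k + 6) \<le> 1 / 1000"
    by (intro divide_left_mono) auto
  then have "1997/1000 \<le> q"
    using assms(3)[unfolded abs_le_iff] c by linarith
  then interpret near_two q
    using assms(2) by unfold_locales
  have small: "\<bar>q ^ (2 * k + 1) * (1 - ones_val q k)\<bar> \<le> 3/8"
    by (rule tail_difference_near_kbonacci[OF assms(1,3)])
  moreover have "\<bar>q ^ (k + 1) * (1 - ones_val q k)\<bar> \<le> 3/8"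
  proof -
    have "\<bar>q ^ (k + 1) * (1 - ones_val q k)\<bar> = q ^ (k + 1) * \<bar>1 - ones_val q k\<bar>"
      using q_pos by (simp add: abs_mult)
    also have "\<dots> \<le> q ^ (2 * k + 1) * \<bar>1 - ones_val q k\<bar>"
      using q_gt1 by (intro mult_right_mono power_increasing) auto
    also have "\<dots> = \<bar>q ^ (2 * k + 1) * (1 - ones_val q k)\<bar>"
      using q_pos by (simp add: abs_mult)
    finally show ?thesis
      using small by linarith
  qed
  ultimately obtain A B C where "bounded_runs 7 A" "bounded_runs 7 B" "bounded_runs 7 C"
    "seq_val q A - seq_val q B = q ^ (2 * k + 1) * (1 - ones_val q k)"
    "seq_val q B - seq_val q C = q ^ (k + 1) * (1 - ones_val q k)"
    by (rule bounded_runs_tails)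
  then show ?thesis
    using assms(1) by (intro in_B3_if_tail_differences[of k]) auto
qed

lemma power_int_minus_nat: "(x::real) powi (- int n) = 1 / x ^ n"
  by (simp add: power_int_minus inverse_eq_divide)

theorem theoremB:
  shows "(\<forall>(k::nat) (q::real). k \<ge> 10 \<longrightarrow> 1 < q \<longrightarrow> q < 2 \<longrightarrow>
            \<bar>q - kbonacci k\<bar> \<le> kbonacci k powi (- (2 * int k + 6)) \<longrightarrow> q \<in> B3)
       \<and> (\<forall>q::real. 1 < q \<longrightarrow> q < 2 \<longrightarrow>
            0 < q - kbonacci 9 \<and> q - kbonacci 9 \<le> kbonacci 9 powi (-24) \<longrightarrow> q \<in> B3)"
proof (intro conjI allI impI)
  fix k :: nat and q :: real
  assume "k \<ge> 10" "1 < q" "q < 2" "\<bar>q - kbonacci k\<bar> \<le> kbonacci k powi (- (2 * int k + 6))"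
  moreover have "kbonacci k powi (- (2 * int k + 6)) = 1 / kbonacci k ^ (2 * k + 6)"
    using power_int_minus_nat[of "kbonacci k" "2 * k + 6"] by simp
  ultimately show "q \<in> B3"
    by (intro in_B3_near_kbonacci[of k]) auto
next
  fix q :: real
  assume "1 < q" "q < 2" "0 < q - kbonacci 9 \<and> q - kbonacci 9 \<le> kbonacci 9 powi (-24)"
  moreover have "kbonacci 9 powi (-24) = 1 / kbonacci 9 ^ (2 * 9 + 6)"
    using power_int_minus_nat[of "kbonacci 9" "2 * 9 + 6"] by simp
  ultimately show "q \<in> B3"
    by (intro in_B3_near_kbonacci[of 9]) auto
qed

end
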